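(* Every quadratic Lagrangian density $L=\mathcal L\omega$ on $J^1Y$ with $$\mathcal L=\tfrac12 a^{\lambda\mu}_{ij}(y)y^i_\lambda y^j_\mu+b^\lambda_i(y)y^i_\lambda+c(y)$$ (where $a,b,c$ are local functions on $Y$ with the transformation laws making $L$ a globally defined density) is semiregular.
   Context: Let $\pi:Y\to X$ be a fibred manifold over an $n$-dimensional manifold $X$, fibred coordinates $(x^\lambda,y^i)$, $\omega=dx^1\wedge\dots\wedge dx^n$. $J^1Y$ is the first jet manifold with coordinates $(x^\lambda,y^i,y^i_\lambda)$. The Legendre bundle $\Pi=\wedge^nT^*X\otimes_YTX\otimes_YV^*Y\to Y$ has coordinates $(x^\lambda,y^i,p^\lambda_i)$. The Legendre morphism of $L$ is $\widehat L:J^1Y\to\Pi$, $p^\lambda_i\circ\widehat L=\partial\mathcal L/\partial y^i_\lambda$, here $p^\lambda_i\circ\widehat L=a^{\lambda\mu}_{ij}y^j_\mu+b^\lambda_i$. A Lagrangian density is semiregular if for every point $q$ of $Q=\widehat L(J^1Y)$ the preimage $\widehat L^{-1}(q)$ is a connected submanifold of $J^1Y$. *)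

theory Defs
  imports "HOL-Analysis.Analysis"
begin

fun iter_dd :: "'a list \<Rightarrow> ('a::real_normed_vector \<Rightarrow> 'b::real_normed_vector) \<Rightarrow> 'a \<Rightarrow> 'b" where
  "iter_dd [] f = f"
| "iter_dd (u # us) f = (\<lambda>x. frechet_derivative (iter_dd us f) (at x) u)"

definition smooth_on :: "'a::real_normed_vector set \<Rightarrow> ('a \<Rightarrow> 'b::real_normed_vector) \<Rightarrow> bool" where
  "smooth_on S f \<longleftrightarrow> (\<forall>us. iter_dd us f differentiable_on S)"

definition submanifold :: "'a::euclidean_space set \<Rightarrow> bool" where
  "submanifold M \<longleftrightarrow>
     (\<forall>s\<in>M. \<exists>W (\<phi>::'a \<Rightarrow> 'a) \<psi> B.
        open W \<and> s \<in> W \<and> open (\<phi> ` W) \<and>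
        smooth_on W \<phi> \<and> smooth_on (\<phi> ` W) \<psi> \<and> (\<forall>x\<in>W. \<psi> (\<phi> x) = x) \<and>
        B \<subseteq> Basis \<and>
        \<phi> ` (W \<inter> M) = \<phi> ` W \<inter> {z. \<forall>i\<in>Basis - B. z \<bullet> i = 0})"

(* A fibred chart of Y: coordinates p = (x, y), x in R^n (index type 'n), y in R^m (index 'm).
   J^1 Y over the chart U is U \<times> R^(n*m), jet coordinates v $ (\<lambda>, i) = y^i_\<lambda>.
   Legendre bundle coordinates p^\<lambda>_i are indexed the same way. *)
type_synonym ('n, 'm) ycoord = "(real^'n) \<times> (real^'m)"
type_synonym ('n, 'm) jcoord = "('n, 'm) ycoord \<times> (real^('n \<times> 'm))"

definition quad_lagrangian ::
  "(('n::finite,'m::finite) ycoord \<Rightarrow> ('n \<times> 'm) \<Rightarrow> ('n \<times> 'm) \<Rightarrow> real)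
   \<Rightarrow> (('n,'m) ycoord \<Rightarrow> (real^('n \<times> 'm))) \<Rightarrow> (('n,'m) ycoord \<Rightarrow> real)
   \<Rightarrow> ('n,'m) jcoord \<Rightarrow> real" where
  "quad_lagrangian a b c = (\<lambda>(p, v).
      (1/2) * (\<Sum>\<alpha>\<in>UNIV. \<Sum>\<beta>\<in>UNIV. a p \<alpha> \<beta> * v $ \<alpha> * v $ \<beta>)
      + (\<Sum>\<alpha>\<in>UNIV. b p $ \<alpha> * v $ \<alpha>) + c p)"

definition legendre :: "(('n::finite,'m::finite) jcoord \<Rightarrow> real)
   \<Rightarrow> ('n,'m) jcoord \<Rightarrow> ('n,'m) ycoord \<times> (real^('n \<times> 'm))" where
  "legendre L = (\<lambda>(p, v).
      (p, \<chi> \<alpha>. frechet_derivative (\<lambda>w. L (p, w)) (at v) (axis \<alpha> 1)))"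

definition semiregular_on :: "('n::finite,'m::finite) ycoord set \<Rightarrow> (('n,'m) jcoord \<Rightarrow> real) \<Rightarrow> bool" where
  "semiregular_on U L \<longleftrightarrow>
     (\<forall>q \<in> legendre L ` (U \<times> UNIV).
        connected {z \<in> U \<times> UNIV. legendre L z = q} \<and> submanifold {z \<in> U \<times> UNIV. legendre L z = q})"

end

theory Submission
  imports Defs
begin

text \<open>Over a point \<open>p\<close> of the base, the Legendre map of a quadratic Lagrangian is the affine
  map \<open>w \<mapsto> A(p) w + b(p)\<close>, where \<open>A(p)\<close> is the symmetrisation of \<open>a(p)\<close>. Every nonempty fibre
  of the Legendre map is therefore a translate of the linear subspace \<open>{0} \<times> ker A(p)\<close>: it is
  convex, hence connected, and a linear change of coordinates straightens it into a coordinate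
  subspace, which is a global slice chart.\<close>

lemma iter_dd_affine:
  assumes "bounded_linear L"
  shows "\<exists>L' c'. bounded_linear L' \<and> iter_dd us (\<lambda>x. L x + c) = (\<lambda>x. L' x + c')"
proof (induction us)
  case Nil
  show ?case using assms by auto
next
  case (Cons u us)
  then obtain L' c' where L': "bounded_linear L'"
    and eq: "iter_dd us (\<lambda>x. L x + c) = (\<lambda>x. L' x + c')" by blast
  have "frechet_derivative (\<lambda>x. L' x + c') (at x) = L'" for x
    using L' by (metis frechet_derivative_at bounded_linear_imp_has_derivative
        has_derivative_add_const)
  then show ?case
    by (intro exI[of _ "\<lambda>_. 0"] exI[of _ "L' u"]) (simp add: eq bounded_linear_zero)
qed

lemma smooth_on_affine:
  assumes "bounded_linear L"
  shows "smooth_on S (\<lambda>x. L x + c)"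
  unfolding smooth_on_def
proof
  fix us
  obtain L' c' where "bounded_linear L'" and "iter_dd us (\<lambda>x. L x + c) = (\<lambda>x. L' x + c')"
    using iter_dd_affine[OF assms] by blast
  then show "iter_dd us (\<lambda>x. L x + c) differentiable_on S"
    by (simp add: bounded_linear_imp_differentiable_on)
qed

lemma subspace_linear_iso_substandard:
  fixes V :: "'a::euclidean_space set"
  assumes "subspace V"
  obtains f g :: "'a \<Rightarrow> 'a" and D
  where "linear f" "linear g" "\<And>x. g (f x) = x" "\<And>x. f (g x) = x"
    "D \<subseteq> Basis" "f ` V = {z. \<forall>i\<in>Basis - D. z \<bullet> i = 0}"
proof -
  obtain B0 where B0: "B0 \<subseteq> V" "independent B0" "V \<subseteq> span B0"
    by (rule basis_exists[of V])
  obtain B where B: "B0 \<subseteq> B" "independent B" "UNIV \<subseteq> span B"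
    by (rule maximal_independent_subset_extend[of B0 UNIV]) (use B0 in auto)
  have "card B = card (Basis :: 'a set)"
    using basis_card_eq_dim[of B UNIV] B by simp
  then obtain h where h: "bij_betw h B (Basis :: 'a set)"
    using finite_same_card_bij[OF independent_imp_finite[OF B(2)] finite_Basis] by blast
  have indep_hB: "independent (h ` B)" and inj_h: "inj_on h B"
    using h independent_Basis by (simp_all add: bij_betw_def)
  obtain f where f: "linear f" "inj f" "\<forall>x\<in>B. f x = h x"
    using linear_independent_extend_inj[OF B(2) indep_hB inj_h] by blast
  obtain g where g: "linear g" "\<And>x. g (f x) = x" "\<And>x. f (g x) = x"
    using linear_injective_isomorphism[OF f(1,2)] by blast
  have D: "h ` B0 \<subseteq> Basis"
    using h B(1) by (auto simp: bij_betw_def)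
  have "f ` B0 = h ` B0"
    using f(3) B(1) by (intro image_cong) auto
  then have "f ` V = span (h ` B0)"
    using span_linear_image[OF f(1), of B0] span_subspace[OF B0(1,3) assms] by simp
  also have "\<dots> = {z. \<forall>i\<in>Basis - h ` B0. z \<bullet> i = 0}"
    unfolding span_substd_basis[OF D] by blast
  finally show thesis
    by (rule that[of f g "h ` B0", OF f(1) g D])
qed

lemma submanifold_translation_subspace:
  fixes V :: "'a::euclidean_space set"
  assumes "subspace V"
  shows "submanifold ((+) s ` V)"
proof -
  obtain f g :: "'a \<Rightarrow> 'a" and D where f: "linear f" and g: "linear g"
    and gf: "\<And>x. g (f x) = x" and fg: "\<And>x. f (g x) = x"
    and D: "D \<subseteq> Basis" and fV: "f ` V = {z. \<forall>i\<in>Basis - D. z \<bullet> i = 0}"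
    using subspace_linear_iso_substandard[OF assms] by blast
  define \<phi> where "\<phi> x = f x + - f s" for x
  define \<psi> where "\<psi> z = g z + s" for z
  have \<psi>\<phi>: "\<psi> (\<phi> x) = x" for x
    unfolding \<phi>_def \<psi>_def using g by (simp add: gf linear_diff)
  have "\<phi> (\<psi> z) = z" for z
    unfolding \<phi>_def \<psi>_def using f by (simp add: fg linear_add)
  then have \<phi>_surj: "\<phi> ` UNIV = UNIV"
    by (rule surjI)
  have "\<phi> ` ((+) s ` V) = f ` V"
    unfolding image_image \<phi>_def using f by (simp add: linear_add)
  then have slice: "\<phi> ` (UNIV \<inter> (+) s ` V) = \<phi> ` UNIV \<inter> {z. \<forall>i\<in>Basis - D. z \<bullet> i = 0}"
    by (simp add: fV \<phi>_surj)
  have "smooth_on UNIV \<phi>" "smooth_on (\<phi> ` UNIV) \<psi>"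
    using smooth_on_affine[of f UNIV "- f s"] smooth_on_affine[of g "\<phi> ` UNIV" s] f g
    by (simp_all add: \<phi>_def[abs_def] \<psi>_def[abs_def] linear_conv_bounded_linear)
  then show ?thesis
    unfolding submanifold_def using slice \<phi>_surj \<psi>\<phi> D
    by (intro ballI exI[of _ UNIV] exI[of _ \<phi>] exI[of _ \<psi>] exI[of _ D]) auto
qed

definition sym_apply ::
  "(('n::finite,'m::finite) ycoord \<Rightarrow> ('n \<times> 'm) \<Rightarrow> ('n \<times> 'm) \<Rightarrow> real)
   \<Rightarrow> ('n,'m) ycoord \<Rightarrow> real^('n \<times> 'm) \<Rightarrow> real^('n \<times> 'm)" where
  "sym_apply a p w = (\<chi> \<alpha>. (1/2) * (\<Sum>\<beta>\<in>UNIV. (a p \<alpha> \<beta> + a p \<beta> \<alpha>) * w $ \<beta>))"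

lemma linear_sym_apply: "linear (sym_apply a p)"
  by (rule linearI)
    (simp_all add: sym_apply_def vec_eq_iff algebra_simps sum.distrib sum_distrib_left)

lemma quad_lagrangian_has_derivative:
  "((\<lambda>w. quad_lagrangian a b c (p, w)) has_derivative (\<lambda>h. (sym_apply a p w + b p) \<bullet> h)) (at w)"
proof -
  let ?D = "\<lambda>h. (1/2) * (\<Sum>\<alpha>\<in>UNIV. \<Sum>\<beta>\<in>UNIV. a p \<alpha> \<beta> * (h $ \<alpha> * w $ \<beta> + w $ \<alpha> * h $ \<beta>))
    + (\<Sum>\<alpha>\<in>UNIV. b p $ \<alpha> * h $ \<alpha>)"
  have "(\<Sum>\<alpha>\<in>UNIV. \<Sum>\<beta>\<in>UNIV. a p \<alpha> \<beta> * (w $ \<alpha> * h $ \<beta>))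
      = (\<Sum>\<alpha>\<in>UNIV. \<Sum>\<beta>\<in>UNIV. a p \<beta> \<alpha> * (w $ \<beta> * h $ \<alpha>))" for h
    by (rule sum.swap)
  then have "?D = (\<lambda>h. (sym_apply a p w + b p) \<bullet> h)"
    by (simp add: fun_eq_iff inner_vec_def sym_apply_def algebra_simps sum.distrib
        sum_distrib_left sum_distrib_right)
  moreover have "((\<lambda>w. quad_lagrangian a b c (p, w)) has_derivative ?D) (at w)"
    unfolding quad_lagrangian_def
    by (auto intro!: derivative_eq_intros
        bounded_linear_imp_has_derivative[OF bounded_linear_vec_nth] simp: algebra_simps sum.distrib)
  ultimately show ?thesis by simp
qed

lemma legendre_quad_lagrangian:
  "legendre (quad_lagrangian a b c) (p, w) = (p, sym_apply a p w + b p)"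
  unfolding legendre_def frechet_derivative_at[OF quad_lagrangian_has_derivative, symmetric]
  by (simp add: vec_eq_iff inner_axis)

lemma legendre_quad_lagrangian_fibre:
  assumes "p0 \<in> U"
  shows "{z \<in> U \<times> UNIV. legendre (quad_lagrangian a b c) z = legendre (quad_lagrangian a b c) (p0, v0)}
    = (+) (p0, v0) ` ({0} \<times> {w. sym_apply a p0 w = 0})" (is "?fibre = ?translate")
proof (intro set_eqI iffI)
  fix z
  assume "z \<in> ?fibre"
  then obtain v where "z = (p0, v)" and "sym_apply a p0 v = sym_apply a p0 v0"
    by (cases z) (auto simp: legendre_quad_lagrangian)
  then show "z \<in> ?translate"
    by (intro image_eqI[of _ _ "(0, v - v0)"]) (auto simp: linear_diff[OF linear_sym_apply])
next
  fix z
  assume "z \<in> ?translate"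
  then show "z \<in> ?fibre"
    using assms by (auto simp: legendre_quad_lagrangian linear_add[OF linear_sym_apply])
qed

theorem lemma18p1:
  fixes U :: "('n::finite, 'm::finite) ycoord set"
    and a :: "('n, 'm) ycoord \<Rightarrow> ('n \<times> 'm) \<Rightarrow> ('n \<times> 'm) \<Rightarrow> real"
    and b :: "('n, 'm) ycoord \<Rightarrow> (real^('n \<times> 'm))"
    and c :: "('n, 'm) ycoord \<Rightarrow> real"
  assumes "open U"
    and "\<And>\<alpha> \<beta>. smooth_on U (\<lambda>p. a p \<alpha> \<beta>)"
    and "smooth_on U b"
    and "smooth_on U c"
  shows "semiregular_on U (quad_lagrangian a b c)"
  unfolding semiregular_on_def
proof
  fix q
  assume "q \<in> legendre (quad_lagrangian a b c) ` (U \<times> UNIV)"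
  then obtain p0 v0 where "p0 \<in> U" and q: "q = legendre (quad_lagrangian a b c) (p0, v0)"
    by auto
  let ?K = "{0} \<times> {w. sym_apply a p0 w = 0}"
  have K: "subspace ?K"
    by (intro subspace_Times subspace_single_0 linear_subspace_kernel linear_sym_apply)
  have "connected ((+) (p0, v0) ` ?K)"
    by (intro convex_connected convex_translation subspace_imp_convex K)
  moreover have "submanifold ((+) (p0, v0) ` ?K)"
    by (rule submanifold_translation_subspace[OF K])
  ultimately show "connected {z \<in> U \<times> UNIV. legendre (quad_lagrangian a b c) z = q} \<and>
      submanifold {z \<in> U \<times> UNIV. legendre (quad_lagrangian a b c) z = q}"
    unfolding q legendre_quad_lagrangian_fibre[OF \<open>p0 \<in> U\<close>] by simp
qed

end
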